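(* Let $K$ be a field of characteristic zero, $m\in K[x,y]$ irreducible over $K(x)$ with $n=\deg_y(m)$, and $A=K(x)[y]/\langle m\rangle$ equipped with the derivation $'$ extending $d/dx$. Let $V=(v_1,\dots,v_n)$ be a $K(x)$-vector space basis of $A$ and let $a\in K[x]\setminus\{0\}$ and $B\in K[x]^{n\times n}$ be such that $aV'=BV$. Let $u\in K[x]\setminus\{0\}$ and let $\phi_V:K[x]^n\to u^{-2}K[x]^n$ be the $K$-linear map $\phi_V(p)=\frac{1}{u^2}\big(aup'-au'p+upB\big)$ (with $p$ a row vector). Let $N_V$ be the $K$-subspace of $K[x]^n$ spanned by all $e_ix^j$ ($1\le i\le n$, $j\in\mathbb N$) that are not the leading term of any element of $\operatorname{im}(\phi_V)\cap K[x]^n$. If $\deg_x(B)\le\deg_x(a)-1$, then $N_V$ is a finite-dimensional $K$-vector space.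
   Context: $e_1,\dots,e_n$ is the standard basis of $K^n$. An element $p\in K[x]^n$ is viewed as a polynomial in $x$ with coefficients in $K^n$: if $p=p^{(r)}x^r+\dots+p^{(0)}$ with $p^{(i)}\in K^n$, $p^{(r)}\neq0$, then $\deg_x(p)=r$ and its leading term is $p^{(r)}x^r$; "$e_ix^j$ is a leading term" means it equals such a $p^{(r)}x^r$. Likewise $\deg_x(B)$ is the maximum degree of the entries of $B$. *)

theory Defs
  imports "HOL-Computational_Algebra.Computational_Algebra"
          "HOL-Library.Function_Algebras"
begin

text \<open>K(x) is modelled as the fraction field 'a poly fract of K[x];
 K[x,y] as 'a poly poly (outer variable y, coefficients in K[x]);
 K(x)[y] as ('a poly fract) poly.\<close>

definition fderiv :: "'a::field_char_0 poly fract \<Rightarrow> 'a poly fract" where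
  "fderiv r = (let (p, q) = (SOME (p, q). q \<noteq> 0 \<and> r = Fract p q) in
      Fract (pderiv p * q - p * pderiv q) (q ^ 2))"

definition liftF :: "'a::field_char_0 poly poly \<Rightarrow> 'a poly fract poly" where
  "liftF m = map_poly to_fract m"

definition dx_poly :: "'a::field_char_0 poly poly \<Rightarrow> 'a poly fract poly" where
  "dx_poly m = map_poly (\<lambda>c. to_fract (pderiv c)) m"

text \<open>The derivation on K(x)[y] extending d/dx and sending y to w:
  D_w f = (coefficientwise d/dx of f) + (d f / d y) * w.
  On A = K(x)[y]/<m> it is the derivation extending d/dx iff
  m_x + m_y * w = 0 in A.\<close>
definition Dw :: "'a::field_char_0 poly fract poly \<Rightarrow> 'a poly fract poly \<Rightarrow> 'a poly fract poly" where
  "Dw w f = map_poly fderiv f + pderiv f * w"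

text \<open>Congruence modulo m in K(x)[y], i.e. equality in A.\<close>
definition congA :: "'a::field_char_0 poly fract poly \<Rightarrow> 'a poly fract poly \<Rightarrow> 'a poly fract poly \<Rightarrow> bool" where
  "congA M f g \<longleftrightarrow> M dvd (f - g)"

text \<open>K[x]^n as functions nat => K[x] vanishing from index n on.\<close>
definition polyvecs :: "nat \<Rightarrow> (nat \<Rightarrow> 'a::field_char_0 poly) set" where
  "polyvecs n = {p. \<forall>i\<ge>n. p i = 0}"

definition phiV :: "'a::field_char_0 poly \<Rightarrow> (nat \<Rightarrow> nat \<Rightarrow> 'a poly) \<Rightarrow> 'a poly \<Rightarrow> nat
    \<Rightarrow> (nat \<Rightarrow> 'a poly) \<Rightarrow> (nat \<Rightarrow> 'a poly fract)" where
  "phiV a B u n p = (\<lambda>j. if j < n then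
      to_fract (a * u * pderiv (p j) - a * pderiv u * p j + u * (\<Sum>i<n. p i * B i j))
        / to_fract (u ^ 2)
    else 0)"

definition imV_poly :: "'a::field_char_0 poly \<Rightarrow> (nat \<Rightarrow> nat \<Rightarrow> 'a poly) \<Rightarrow> 'a poly \<Rightarrow> nat
    \<Rightarrow> (nat \<Rightarrow> 'a poly) set" where
  "imV_poly a B u n = {q \<in> polyvecs n. \<exists>p\<in>polyvecs n. phiV a B u n p = (\<lambda>j. to_fract (q j))}"

definition vdeg :: "nat \<Rightarrow> (nat \<Rightarrow> 'a::zero poly) \<Rightarrow> nat" where
  "vdeg n q = Max ((\<lambda>i. degree (q i)) ` {..<n})"

definition is_leading_term :: "nat \<Rightarrow> (nat \<Rightarrow> 'a::field_char_0 poly) \<Rightarrow> nat \<Rightarrow> nat \<Rightarrow> bool" where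
  "is_leading_term n q i j \<longleftrightarrow> q \<in> polyvecs n \<and> q \<noteq> 0 \<and> vdeg n q = j \<and>
      (\<forall>k<n. coeff (q k) j = (if k = i then 1 else 0))"

definition emon :: "nat \<Rightarrow> nat \<Rightarrow> (nat \<Rightarrow> 'a::field_char_0 poly)" where
  "emon i j = (\<lambda>k. if k = i then monom 1 j else 0)"

definition kscale :: "'a::field_char_0 \<Rightarrow> (nat \<Rightarrow> 'a poly) \<Rightarrow> (nat \<Rightarrow> 'a poly)" where
  "kscale c p = (\<lambda>i. smult c (p i))"

definition NV :: "'a::field_char_0 poly \<Rightarrow> (nat \<Rightarrow> nat \<Rightarrow> 'a poly) \<Rightarrow> 'a poly \<Rightarrow> nat
    \<Rightarrow> (nat \<Rightarrow> 'a poly) set" where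
  "NV a B u n = module.span kscale
     {emon i j | i j. i < n \<and> \<not> (\<exists>q\<in>imV_poly a B u n. is_leading_term n q i j)}"

definition fin_dim_K :: "(nat \<Rightarrow> 'a::field_char_0 poly) set \<Rightarrow> bool" where
  "fin_dim_K S \<longleftrightarrow> (\<exists>F. finite F \<and> module.span kscale F = S)"

end

theory Submission
  imports Defs "Jordan_Normal_Form.Char_Poly"
begin

(* Multiplying by u clears the denominator: phi_V(u P) = a P' + P B. For P = x^k r with
   r in K^n constant, the bound deg B < deg a makes x^(deg a + k - 1) the highest power
   occurring in a P' + P B, with coefficient vector r (k lc(a) I + C), where C collects the
   coefficients of x^(deg a - 1) in B. In characteristic zero, k lc(a) avoids the finitely
   many eigenvalues of -C for all large k, so r can be chosen to make this vector any e_i.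
   Hence all but finitely many e_i x^j are leading terms, and N_V is spanned by the rest. *)

lemma eventually_det_nat_scaled_identity_plus_nonzero:
  fixes C :: "'a::field_char_0 mat"
  assumes C: "C \<in> carrier_mat n n" and c: "c \<noteq> 0"
  shows "\<forall>\<^sub>F k in sequentially. det (of_nat k * c \<cdot>\<^sub>m 1\<^sub>m n + C) \<noteq> 0"
proof -
  have det_eq: "det (e \<cdot>\<^sub>m 1\<^sub>m n + C) = poly (char_poly (- C)) e" for e
  proof -
    have "- char_matrix (- C) e = e \<cdot>\<^sub>m 1\<^sub>m n + C"
      using C by (intro eq_matI) (auto simp: char_matrix_def)
    then show ?thesis using C by (simp add: char_poly_matrix)
  qed
  have "char_poly (- C) \<noteq> 0"
    using degree_monic_char_poly[of "- C" n] C by auto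
  then have "finite {e. poly (char_poly (- C)) e = 0}"
    by (rule poly_roots_finite)
  moreover have "inj (\<lambda>k::nat. of_nat k * c)"
    using c by (auto intro: injI)
  ultimately have "finite {k::nat. poly (char_poly (- C)) (of_nat k * c) = 0}"
    using finite_vimageI[of "{e. poly (char_poly (- C)) e = 0}" "\<lambda>k::nat. of_nat k * c"]
    by (simp add: vimage_def)
  then show ?thesis
    by (simp add: det_eq flip: cofinite_eq_sequentially add: eventually_cofinite)
qed

lemma row_combination_eq_unit_vector:
  fixes M :: "'a::field mat"
  assumes M: "M \<in> carrier_mat n n" and det: "det M \<noteq> 0" and i: "i < n"
  shows "\<exists>r. \<forall>j<n. (\<Sum>l<n. r l * M $$ (l, j)) = (if i = j then 1 else 0)"
proof -
  obtain M' where M': "M' \<in> carrier_mat n n" and inv: "M' * M = 1\<^sub>m n"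
    using det_non_zero_imp_unit[OF M det, unfolded Units_def, of "()"]
    by (auto simp: ring_mat_def)
  have "(\<Sum>l<n. M' $$ (i, l) * M $$ (l, j)) = (if i = j then 1 else 0)" if j: "j < n" for j
  proof -
    have "(\<Sum>l<n. M' $$ (i, l) * M $$ (l, j)) = (M' * M) $$ (i, j)"
      using M M' i j by (simp add: scalar_prod_def lessThan_atLeast0)
    also have "\<dots> = (if i = j then 1 else 0)"
      using inv i j by simp
    finally show ?thesis .
  qed
  then show ?thesis by (intro exI[of _ "\<lambda>l. M' $$ (i, l)"]) blast
qed

lemma eventually_solvable_nat_shifted_system:
  fixes C :: "nat \<Rightarrow> nat \<Rightarrow> 'a::field_char_0"
  assumes c: "c \<noteq> 0"
  shows "\<forall>\<^sub>F k in sequentially. \<forall>i<n. \<exists>r. \<forall>j<n.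
           of_nat k * c * r j + (\<Sum>l<n. r l * C l j) = (if i = j then 1 else 0)"
proof -
  define M where "M = mat n n (\<lambda>(l, j). C l j)"
  have M: "M \<in> carrier_mat n n" by (simp add: M_def)
  have row_eq: "(\<Sum>l<n. r l * (e \<cdot>\<^sub>m 1\<^sub>m n + M) $$ (l, j)) = e * r j + (\<Sum>l<n. r l * C l j)"
    if j: "j < n" for e r j
    using j by (simp add: M_def distrib_left sum.distrib)
      (simp add: if_distrib[of "\<lambda>x. _ * x"] mult.commute cong: if_cong)
  show ?thesis
    using eventually_det_nat_scaled_identity_plus_nonzero[OF M c]
  proof eventually_elim
    case (elim k)
    show ?case
    proof (intro allI impI)
      fix i assume i: "i < n"
      have "of_nat k * c \<cdot>\<^sub>m 1\<^sub>m n + M \<in> carrier_mat n n" using M by simp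
      from row_combination_eq_unit_vector[OF this elim i] obtain r where
        "\<forall>j<n. (\<Sum>l<n. r l * (of_nat k * c \<cdot>\<^sub>m 1\<^sub>m n + M) $$ (l, j)) = (if i = j then 1 else 0)"
        by blast
      then show "\<exists>r. \<forall>j<n. of_nat k * c * r j + (\<Sum>l<n. r l * C l j) = (if i = j then 1 else 0)"
        by (intro exI[of _ r]) (simp add: row_eq)
    qed
  qed
qed

lemma phiV_mult_u:
  assumes u: "u \<noteq> 0"
  shows "phiV a B u n (\<lambda>l. u * P l)
       = (\<lambda>j. to_fract (if j < n then a * pderiv (P j) + (\<Sum>l<n. P l * B l j) else 0))"
proof
  fix j
  define q where "q = a * pderiv (P j) + (\<Sum>l<n. P l * B l j)"
  have sum_u: "(\<Sum>l<n. u * P l * B l j) = u * (\<Sum>l<n. P l * B l j)"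
    by (simp add: sum_distrib_left mult.assoc)
  have "a * u * pderiv (u * P j) - a * pderiv u * (u * P j) + u * (\<Sum>l<n. u * P l * B l j)
      = u ^ 2 * q"
    unfolding sum_u q_def by (simp add: pderiv_mult power2_eq_square) (simp add: algebra_simps)
  then have "phiV a B u n (\<lambda>l. u * P l) j = (if j < n then to_fract (u ^ 2 * q) / to_fract (u ^ 2) else 0)"
    by (simp add: phiV_def)
  then show "phiV a B u n (\<lambda>l. u * P l) j = to_fract (if j < n then q else 0)"
    using u by simp
qed

lemma is_leading_term_if_top_coeffs:
  assumes q: "q \<in> polyvecs n" and i: "i < n"
    and deg: "\<And>j. degree (q j) \<le> t"
    and top: "\<And>k. k < n \<Longrightarrow> coeff (q k) t = (if k = i then 1 else 0)"
  shows "is_leading_term n q i t"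
proof -
  have "degree (q i) = t"
    using deg top[OF i] by (intro antisym le_degree) auto
  then have "vdeg n q = t"
    unfolding vdeg_def using deg i by (intro Max_eqI) auto
  moreover have "q \<noteq> 0"
    using top[OF i] by auto
  ultimately show ?thesis
    using q top unfolding is_leading_term_def by blast
qed

context
  fixes a :: "'a::field_char_0 poly" and B :: "nat \<Rightarrow> nat \<Rightarrow> 'a poly" and n k :: nat
  assumes k: "k \<ge> 1"
    and degB: "\<forall>i<n. \<forall>j<n. B i j \<noteq> 0 \<longrightarrow> degree (B i j) + 1 \<le> degree a"
begin

lemma degree_image_of_monomials_le:
  assumes j: "j < n"
  shows "degree (a * pderiv (monom (r j) k) + (\<Sum>l<n. monom (r l) k * B l j))
       \<le> degree a + k - 1"
proof -
  have "degree (pderiv (monom (r j) k)) \<le> k - 1"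
    by (simp add: pderiv_monom degree_monom_le)
  then have "degree (a * pderiv (monom (r j) k)) \<le> degree a + k - 1"
    using degree_mult_le[of a "pderiv (monom (r j) k)"] k by linarith
  moreover have "degree (monom (r l) k * B l j) \<le> degree a + k - 1" if l: "l < n" for l
  proof (cases "B l j = 0")
    case False
    then have "degree (B l j) + 1 \<le> degree a" using degB l j by blast
    then show ?thesis
      using degree_mult_le[of "monom (r l) k" "B l j"] degree_monom_le[of "r l" k] by linarith
  qed simp
  then have "degree (\<Sum>l<n. monom (r l) k * B l j) \<le> degree a + k - 1"
    by (intro degree_sum_le) auto
  ultimately show ?thesis by (rule degree_add_le)
qed

lemma top_coeff_image_of_monomials:
  assumes j: "j < n"
  shows "coeff (a * pderiv (monom (r j) k) + (\<Sum>l<n. monom (r l) k * B l j)) (degree a + k - 1)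
       = of_nat k * lead_coeff a * r j + (\<Sum>l<n. r l * coeff (B l j) (degree a - 1))"
proof -
  obtain k' where k': "k = Suc k'" using k by (cases k) auto
  have "coeff (a * pderiv (monom (r j) k)) (degree a + k - 1) = of_nat k * lead_coeff a * r j"
    by (simp add: pderiv_monom k' mult.commute[of a] coeff_monom_mult)
  moreover have "coeff (monom (r l) k * B l j) (degree a + k - 1) = r l * coeff (B l j) (degree a - 1)"
    if l: "l < n" for l
  proof (cases "B l j = 0")
    case False
    then have "degree (B l j) + 1 \<le> degree a" using degB l j by blast
    then have "degree a + k - 1 = k + (degree a - 1)" using k by linarith
    then show ?thesis by (simp add: coeff_monom_mult)
  qed simp
  ultimately show ?thesis
    by (simp add: coeff_sum)
qed

lemma leading_term_in_imV_poly:
  assumes u: "u \<noteq> 0" and i: "i < n"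
    and r: "\<forall>j<n. of_nat k * lead_coeff a * r j + (\<Sum>l<n. r l * coeff (B l j) (degree a - 1))
                  = (if i = j then 1 else 0)"
  shows "\<exists>q\<in>imV_poly a B u n. is_leading_term n q i (degree a + k - 1)"
proof -
  define P where "P = (\<lambda>l. if l < n then monom (r l) k else 0)"
  define q where "q = (\<lambda>j. if j < n then a * pderiv (P j) + (\<Sum>l<n. P l * B l j) else 0)"
  have q_eq: "q j = a * pderiv (monom (r j) k) + (\<Sum>l<n. monom (r l) k * B l j)" if j: "j < n" for j
    using j by (simp add: q_def P_def)
  have "(\<lambda>l. u * P l) \<in> polyvecs n" "q \<in> polyvecs n"
    by (simp_all add: polyvecs_def P_def q_def)
  moreover have "phiV a B u n (\<lambda>l. u * P l) = (\<lambda>j. to_fract (q j))"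
    unfolding phiV_mult_u[OF u] q_def ..
  ultimately have "q \<in> imV_poly a B u n"
    unfolding imV_poly_def by blast
  moreover have "is_leading_term n q i (degree a + k - 1)"
  proof (rule is_leading_term_if_top_coeffs)
    show "degree (q j) \<le> degree a + k - 1" for j
    proof (cases "j < n")
      case True
      then show ?thesis unfolding q_eq[OF True] by (rule degree_image_of_monomials_le)
    qed (simp add: q_def)
    show "coeff (q j) (degree a + k - 1) = (if j = i then 1 else 0)" if j: "j < n" for j
      unfolding q_eq[OF j] top_coeff_image_of_monomials[OF j] using r j by auto
  qed (use \<open>q \<in> polyvecs n\<close> i in auto)
  ultimately show ?thesis by blast
qed

end

lemma fin_dim_NV_if_eventually_leading_terms:
  assumes "\<And>i j. i < n \<Longrightarrow> j \<ge> J \<Longrightarrow> \<exists>q\<in>imV_poly a B u n. is_leading_term n q i j"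
  shows "fin_dim_K (NV a B u n)"
proof -
  let ?G = "{emon i j | i j. i < n \<and> \<not> (\<exists>q\<in>imV_poly a B u n. is_leading_term n q i j)}"
  have "?G \<subseteq> (\<lambda>(i, j). emon i j) ` ({..<n} \<times> {..<J})"
    using assms by (fastforce simp: not_le)
  then have "finite ?G"
    by (rule finite_subset) simp
  then show ?thesis
    unfolding fin_dim_K_def NV_def by blast
qed

(* Jordan_Normal_Form brings the module operation smult into scope; the statement means
   the polynomial smult. *)
hide_const (open) Module.module.smult

theorem proposition14:
  fixes m :: "'a::field_char_0 poly poly"
    and n :: nat
    and v :: "nat \<Rightarrow> 'a poly fract poly"
    and a u :: "'a poly"
    and B :: "nat \<Rightarrow> nat \<Rightarrow> 'a poly"
  assumes irr: "irreducible (liftF m)"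
    and n_def: "n = degree m"
    and basis: "\<forall>f. \<exists>!c :: nat \<Rightarrow> 'a poly fract. (\<forall>i\<ge>n. c i = 0) \<and>
                   congA (liftF m) f (\<Sum>i<n. smult (c i) (v i))"
    and a_nz: "a \<noteq> 0"
    and deriv_eq: "\<exists>w. congA (liftF m) (dx_poly m + pderiv (liftF m) * w) 0 \<and>
                   (\<forall>i<n. congA (liftF m) (smult (to_fract a) (Dw w (v i)))
                            (\<Sum>j<n. smult (to_fract (B i j)) (v j)))"
    and u_nz: "u \<noteq> 0"
    and degB: "\<forall>i<n. \<forall>j<n. B i j \<noteq> 0 \<longrightarrow> degree (B i j) + 1 \<le> degree a"
  shows "fin_dim_K (NV a B u n)"
proof -
  have "lead_coeff a \<noteq> 0" using a_nz by simp
  from eventually_solvable_nat_shifted_system[OF this, of n "\<lambda>l j. coeff (B l j) (degree a - 1)"]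
  obtain k0 where k0: "\<And>k i. k \<ge> k0 \<Longrightarrow> i < n \<Longrightarrow> \<exists>r. \<forall>j<n.
      of_nat k * lead_coeff a * r j + (\<Sum>l<n. r l * coeff (B l j) (degree a - 1)) = (if i = j then 1 else 0)"
    unfolding eventually_sequentially by blast
  show ?thesis
  proof (rule fin_dim_NV_if_eventually_leading_terms)
    fix i j assume i: "i < n" and j: "j \<ge> degree a + k0"
    define k where "k = j + 1 - degree a"
    have k: "k \<ge> 1" "k \<ge> k0" and j_eq: "j = degree a + k - 1"
      using j by (auto simp: k_def)
    obtain r where r: "\<forall>j<n. of_nat k * lead_coeff a * r j
        + (\<Sum>l<n. r l * coeff (B l j) (degree a - 1)) = (if i = j then 1 else 0)"
      using k0[OF k(2) i] by blast
    show "\<exists>q\<in>imV_poly a B u n. is_leading_term n q i j"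
      unfolding j_eq by (rule leading_term_in_imV_poly[OF k(1) degB u_nz i r])
  qed
qed

end
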